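(* If $F:\mathbb{R}\to\mathbb{R}$ is a Darboux function whose set of points of continuity is uncountable, then there is a continuous, non-constant function $g:\mathbb{R}\to\mathbb{R}$ such that $F+g$ is Darboux.
   Context: A function $F:\mathbb{R}\to\mathbb{R}$ is Darboux if the image under $F$ of every interval is an interval. *)

theory Defs
  imports "HOL-Analysis.Analysis"
begin

text \<open>Intervals of the real line are exactly the sets satisfying is_interval
  (including empty and degenerate ones, which does not affect the notion).\<close>
definition darboux :: "(real \<Rightarrow> real) \<Rightarrow> bool" where
  "darboux F \<longleftrightarrow> (\<forall>I::real set. is_interval I \<longrightarrow> is_interval (F ` I))"

end

theory Submission
  imports Defs
begin

(* If g is continuous and locally constant around every discontinuity of the Darboux function F,
   then F + g is Darboux: if F + g omitted a value y between its values at the ends of a segment S,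
   the predicate F + g < y would be locally constant on S (near a continuity point of F by
   continuity, near any other point because there F + g is F plus a constant and F maps
   subintervals onto intervals), contradicting the connectedness of S.

   Such a g exists when F has uncountably many continuity points. These contain a nonempty set D
   without isolated points, and around points of D one nests a Cantor scheme of closed intervals
   such that F oscillates by at most 1/(n+1) on each interval of level n+1. Every point of the
   resulting Cantor set is then a continuity point of F, and g is the Cantor function of the
   scheme: the limit of the proportion of level-n intervals lying to the left of x. It is
   continuous, rises from 0 to 1, and is locally constant off the Cantor set. *)

lemma darbouxI:
  fixes F :: "real \<Rightarrow> real"
  assumes "\<And>s t y. y \<in> closed_segment (F s) (F t) \<Longrightarrow> y \<in> F ` closed_segment s t"
  shows "darboux F"
  unfolding darboux_def
proof (intro allI impI)
  fix I :: "real set"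
  assume I: "is_interval I"
  show "is_interval (F ` I)"
    unfolding is_interval_1
  proof (intro ballI allI impI)
    fix u v y
    assume "u \<in> F ` I" "v \<in> F ` I" "u \<le> y \<and> y \<le> v"
    then obtain s t where st: "s \<in> I" "t \<in> I" and "y \<in> closed_segment (F s) (F t)"
      by (auto simp: closed_segment_eq_real_ivl)
    from this(3) have "y \<in> F ` closed_segment s t" by (rule assms)
    moreover have "closed_segment s t \<subseteq> I"
      using I st by (meson is_interval_convex convex_contains_segment)
    ultimately show "y \<in> F ` I" by blast
  qed
qed

lemma darboux_segment_subset:
  fixes F :: "real \<Rightarrow> real"
  assumes "darboux F" "is_interval J" "a \<in> J" "b \<in> J"
  shows "closed_segment (F a) (F b) \<subseteq> F ` J"
proof -
  have "is_interval (F ` J)" using assms(1,2) by (simp add: darboux_def)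
  then show ?thesis using assms(3,4) by (meson convex_contains_segment imageI is_interval_convex)
qed

lemma isCont_eventually_same_side:
  fixes h :: "'a::t2_space \<Rightarrow> 'b::linorder_topology"
  assumes "isCont h a" "h a \<noteq> y"
  shows "\<forall>\<^sub>F b in at a within S. (h a < y) = (h b < y)"
proof -
  have lim: "(h \<longlongrightarrow> h a) (at a within S)"
    using assms(1) by (simp add: continuous_at_imp_continuous_within flip: continuous_within)
  show ?thesis
  proof (cases "h a < y")
    case True
    with lim have "\<forall>\<^sub>F b in at a within S. h b < y" by (rule order_tendstoD)
    then show ?thesis by (rule eventually_mono) (simp add: True)
  next
    case False
    with assms(2) have "y < h a" by simp
    with lim have "\<forall>\<^sub>F b in at a within S. y < h b" by (rule order_tendstoD)
    then show ?thesis by (rule eventually_mono) (simp add: False)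
  qed
qed

lemma darboux_add_const_eventually_same_side:
  fixes F g :: "real \<Rightarrow> real"
  assumes F: "darboux F" and "e > 0" and g: "\<forall>w\<in>ball a e. g w = g a"
    and S: "is_interval S" "a \<in> S" and miss: "y \<notin> (\<lambda>x. F x + g x) ` S"
  shows "\<forall>\<^sub>F b in at a within S. (F a + g a < y) = (F b + g b < y)"
proof -
  have same_side: "(F a + g a < y) = (F b + g b < y)" if b: "b \<in> ball a e" "b \<in> S" for b
  proof (rule ccontr)
    assume "(F a + g a < y) \<noteq> (F b + g b < y)"
    moreover have "F a + g a \<noteq> y" "F b + g b \<noteq> y" using miss S(2) b(2) by auto
    moreover have "g b = g a" using g b(1) by blast
    ultimately have "y - g a \<in> closed_segment (F a) (F b)"
      unfolding closed_segment_eq_real_ivl by auto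
    also have "\<dots> \<subseteq> F ` (ball a e \<inter> S)"
      using S b \<open>e > 0\<close> by (intro darboux_segment_subset[OF F]) (auto simp: is_interval_convex_1 convex_Int)
    finally obtain w where w: "w \<in> ball a e \<inter> S" "F w = y - g a" by auto
    then have "F w + g w = y" using g by simp
    then show False using miss w(1) by blast
  qed
  have "\<forall>\<^sub>F b in at a within S. b \<in> ball a e \<and> b \<in> S" by (rule eventually_at_ball[OF \<open>e > 0\<close>])
  then show ?thesis by (rule eventually_mono) (use same_side in blast)
qed

lemma darboux_add_locally_constant:
  fixes F g :: "real \<Rightarrow> real"
  assumes F: "darboux F" and g: "continuous_on UNIV g"
    and const: "\<And>x. \<not> isCont F x \<Longrightarrow> \<exists>e>0. \<forall>w\<in>ball x e. g w = g x"
  shows "darboux (\<lambda>x. F x + g x)"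
proof (rule darbouxI)
  fix s t y
  assume y: "y \<in> closed_segment (F s + g s) (F t + g t)"
  define S where "S = closed_segment s t"
  have "is_interval S" by (simp add: S_def is_interval_convex_1)
  show "y \<in> (\<lambda>x. F x + g x) ` closed_segment s t"
    unfolding S_def[symmetric]
  proof (rule ccontr)
    assume miss: "y \<notin> (\<lambda>x. F x + g x) ` S"
    have "(F s + g s < y) = (F t + g t < y)"
    proof (rule connected_local_const[where f = "\<lambda>x. F x + g x < y"])
      show "connected S" "s \<in> S" "t \<in> S" by (simp_all add: S_def)
      show "\<forall>a\<in>S. \<forall>\<^sub>F b in at a within S. (F a + g a < y) = (F b + g b < y)"
      proof
        fix a assume "a \<in> S"
        show "\<forall>\<^sub>F b in at a within S. (F a + g a < y) = (F b + g b < y)"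
        proof (cases "isCont F a")
          case True
          moreover have "isCont g a" using g continuous_on_eq_continuous_at[OF open_UNIV] by blast
          ultimately have "isCont (\<lambda>x. F x + g x) a" by (intro continuous_intros)
          moreover have "F a + g a \<noteq> y" using miss \<open>a \<in> S\<close> by auto
          ultimately show ?thesis by (rule isCont_eventually_same_side[where h = "\<lambda>x. F x + g x"])
        next
          case False
          then obtain e where "e > 0" "\<forall>w\<in>ball a e. g w = g a" using const by blast
          from darboux_add_const_eventually_same_side[OF F this \<open>is_interval S\<close> \<open>a \<in> S\<close> miss]
          show ?thesis .
        qed
      qed
    qed
    moreover have "F s + g s \<noteq> y" "F t + g t \<noteq> y"
      using miss ends_in_segment[of s t] unfolding S_def by blast+
    ultimately show False
      using y by (cases "F s + g s \<le> F t + g t") (simp_all add: closed_segment_eq_real_ivl)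
  qed
qed

lemma uncountable_imp_dense_in_itself_subset:
  fixes C :: "'a::second_countable_topology set"
  assumes "uncountable C"
  obtains D where "D \<subseteq> C" "D \<noteq> {}" "\<forall>x\<in>D. x islimpt D"
proof -
  define U where "U = \<Union>{T. open T \<and> countable (C \<inter> T)}"
  obtain \<T> where \<T>: "\<T> \<subseteq> {T. open T \<and> countable (C \<inter> T)}" "countable \<T>" "\<Union>\<T> = U"
    using Lindelof[of "{T. open T \<and> countable (C \<inter> T)}"] unfolding U_def by blast
  have "C \<inter> U = (\<Union>T\<in>\<T>. C \<inter> T)" using \<T>(3) by blast
  moreover have "countable (\<Union>T\<in>\<T>. C \<inter> T)" using \<T>(1,2) by (intro countable_UN) auto
  ultimately have countable_CU: "countable (C \<inter> U)" by simp
  show ?thesis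
  proof
    show "C - U \<subseteq> C" by blast
    show "C - U \<noteq> {}"
      using countable_CU assms by (metis Diff_eq_empty_iff inf.absorb_iff1)
    show "\<forall>x\<in>C - U. x islimpt C - U"
      unfolding islimpt_def
    proof (intro ballI allI impI)
      fix x T assume x: "x \<in> C - U" and "x \<in> T" "open T"
      then have "uncountable (C \<inter> T)" unfolding U_def by blast
      then have "uncountable (C \<inter> T - (C \<inter> U) - {x})"
        using countable_CU by (simp add: uncountable_minus_countable)
      then obtain y where "y \<in> C \<inter> T - (C \<inter> U) - {x}" by (metis countable_empty ex_in_conv)
      then show "\<exists>y\<in>C - U. y \<in> T \<and> y \<noteq> x" by blast
    qed
  qed
qed

lemma isCont_eventually_small_oscillation:
  fixes F :: "'a::metric_space \<Rightarrow> 'b::metric_space"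
  assumes "isCont F c" "\<epsilon> > 0"
  shows "\<forall>\<^sub>F r in at_right 0. \<forall>y\<in>cball c r. \<forall>z\<in>cball c r. dist (F y) (F z) \<le> \<epsilon>"
proof -
  obtain \<delta> where "\<delta> > 0" and \<delta>: "\<And>w. dist w c < \<delta> \<Longrightarrow> dist (F w) (F c) < \<epsilon> / 2"
    using assms(1)[unfolded continuous_at_eps_delta, rule_format, of "\<epsilon> / 2"] assms(2) by auto
  have "\<forall>y\<in>cball c r. \<forall>z\<in>cball c r. dist (F y) (F z) \<le> \<epsilon>" if "r < \<delta>" for r
  proof (intro ballI)
    fix y z assume "y \<in> cball c r" "z \<in> cball c r"
    then have "dist y c < \<delta>" "dist z c < \<delta>" using that by (simp_all add: dist_commute)
    then have "dist (F y) (F c) < \<epsilon> / 2" "dist (F z) (F c) < \<epsilon> / 2" using \<delta> by blast+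
    then show "dist (F y) (F z) \<le> \<epsilon>" using dist_triangle_half_l less_imp_le by blast
  qed
  then show ?thesis by (intro eventually_at_rightI[of 0 \<delta>]) (use \<open>\<delta> > 0\<close> in auto)
qed

lemma split_near_continuity_points:
  fixes F :: "real \<Rightarrow> real"
  assumes cont: "\<forall>x\<in>D. isCont F x" and perfect: "\<forall>x\<in>D. x islimpt D"
    and d: "d \<in> D" "a < d" "d < b" and "\<epsilon> > 0"
  obtains a0 b0 a1 b1 where "a < a0" "a0 < b0" "b0 < a1" "a1 < b1" "b1 < b"
    "\<exists>d\<in>D. a0 < d \<and> d < b0" "\<exists>d\<in>D. a1 < d \<and> d < b1"
    "\<forall>y\<in>{a0..b0}. \<forall>z\<in>{a0..b0}. dist (F y) (F z) \<le> \<epsilon>"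
    "\<forall>y\<in>{a1..b1}. \<forall>z\<in>{a1..b1}. dist (F y) (F z) \<le> \<epsilon>"
proof -
  have "min (d - a) (b - d) > 0" using d by simp
  then obtain d' where d': "d' \<in> D" "d' \<noteq> d" "dist d' d < min (d - a) (b - d)"
    using perfect d(1) unfolding islimpt_approachable by blast
  define p where "p = min d d'"
  define q where "q = max d d'"
  have "a < d'" "d' < b" using d'(3) by (auto simp: dist_real_def)
  then have pq: "a < p" "p < q" "q < b" "p \<in> D" "q \<in> D"
    using d d'(1,2) by (auto simp: p_def q_def min_def max_def)
  define m where "m = min (p - a) (min ((q - p) / 2) (b - q))"
  have "\<forall>\<^sub>F r in at_right 0. 0 < r \<and> r < m"
    using pq by (intro eventually_at_rightI[of 0 m]) (auto simp: m_def)
  with isCont_eventually_small_oscillation[OF bspec[OF cont pq(4)] \<open>\<epsilon> > 0\<close>]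
    isCont_eventually_small_oscillation[OF bspec[OF cont pq(5)] \<open>\<epsilon> > 0\<close>]
  have "\<forall>\<^sub>F r in at_right 0. (\<forall>y\<in>cball p r. \<forall>z\<in>cball p r. dist (F y) (F z) \<le> \<epsilon>) \<and>
      (\<forall>y\<in>cball q r. \<forall>z\<in>cball q r. dist (F y) (F z) \<le> \<epsilon>) \<and> 0 < r \<and> r < m"
    by (simp add: eventually_conj_iff)
  from eventually_happens'[OF trivial_limit_at_right_real this] obtain r where
    r: "\<forall>y\<in>cball p r. \<forall>z\<in>cball p r. dist (F y) (F z) \<le> \<epsilon>"
      "\<forall>y\<in>cball q r. \<forall>z\<in>cball q r. dist (F y) (F z) \<le> \<epsilon>" "0 < r" "r < m"
    by blast
  have "r < p - a" "r < (q - p) / 2" "r < b - q" using r(4) by (simp_all add: m_def)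
  show ?thesis
  proof (rule that[of "p - r" "p + r" "q - r" "q + r"])
    show "\<exists>d\<in>D. p - r < d \<and> d < p + r" using pq(4) r(3) by (intro bexI[of _ p]) auto
    show "\<exists>d\<in>D. q - r < d \<and> d < q + r" using pq(5) r(3) by (intro bexI[of _ q]) auto
    show "\<forall>y\<in>{p - r..p + r}. \<forall>z\<in>{p - r..p + r}. dist (F y) (F z) \<le> \<epsilon>"
      using r(1) by (simp add: cball_eq_atLeastAtMost)
    show "\<forall>y\<in>{q - r..q + r}. \<forall>z\<in>{q - r..q + r}. dist (F y) (F z) \<le> \<epsilon>"
      using r(2) by (simp add: cball_eq_atLeastAtMost)
  qed (use \<open>r < p - a\<close> \<open>r < (q - p) / 2\<close> \<open>r < b - q\<close> r(3) in auto)
qed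

lemma downward_closed_eq_lessThan_card:
  fixes S :: "nat set"
  assumes "finite S" and down: "\<And>k j. k \<in> S \<Longrightarrow> j < k \<Longrightarrow> j \<in> S"
  shows "S = {..<card S}"
proof (rule card_subset_eq[symmetric])
  show "{..<card S} \<subseteq> S"
  proof (rule ccontr)
    assume "\<not> {..<card S} \<subseteq> S"
    then obtain j where "j < card S" "j \<notin> S" by auto
    then have "k < j" if "k \<in> S" for k
      using that down[OF that] by (metis linorder_neqE_nat)
    then have "S \<subseteq> {..<j}" by auto
    then have "card S \<le> j" using card_mono[of "{..<j}" S] by simp
    with \<open>j < card S\<close> show False by simp
  qed
qed (simp_all add: assms(1))

(* Level n consists of the intervals [A n k, B n k] for k < 2 ^ n, from left to right; the
   intervals 2 k and 2 k + 1 of level n + 1 lie inside interval k of level n. *)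
locale cantor_scheme =
  fixes A B :: "nat \<Rightarrow> nat \<Rightarrow> real"
  assumes A_less_B: "A n k < B n k"
    and A_less_A_Suc: "A n (k div 2) < A (Suc n) k"
    and B_Suc_less_B: "B (Suc n) k < B n (k div 2)"
    and B_less_A_sibling: "even k \<Longrightarrow> B (Suc n) k < A (Suc n) (Suc k)"
begin

lemma B_less_A: "k < l \<Longrightarrow> l < 2 ^ n \<Longrightarrow> B n k < A n l"
proof (induction n arbitrary: k l)
  case (Suc n)
  show ?case
  proof (cases "k div 2 = l div 2")
    case True
    with Suc.prems(1) have "even k" "l = Suc k" by presburger+
    then show ?thesis by (simp add: B_less_A_sibling)
  next
    case False
    with Suc.prems have "k div 2 < l div 2" "l div 2 < 2 ^ n"
      by (auto simp: div_le_mono le_less)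
    then have "B n (k div 2) < A n (l div 2)" by (rule Suc.IH)
    then show ?thesis using B_Suc_less_B[of n k] A_less_A_Suc[of n l] by linarith
  qed
qed simp

lemma ancestor_bounds: "A n (k div 2 ^ d) \<le> A (n + d) k \<and> B (n + d) k \<le> B n (k div 2 ^ d)"
proof (induction d arbitrary: k)
  case (Suc d)
  have "k div 2 ^ Suc d = k div 2 div 2 ^ d" by (simp add: div_mult2_eq)
  then show ?case
    using Suc.IH[of "k div 2"] A_less_A_Suc[of "n + d" k] B_Suc_less_B[of "n + d" k] by auto
qed simp

lemma root_bounds: "k < 2 ^ n \<Longrightarrow> A 0 0 \<le> A n k \<and> B n k \<le> B 0 0"
  using ancestor_bounds[of 0 k n] by simp

definition cantor_set :: "real set" where
  "cantor_set = (\<Inter>n. \<Union>k<2 ^ n. {A n k..B n k})"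

definition left_count :: "nat \<Rightarrow> real \<Rightarrow> nat" where
  "left_count n x = card {k. k < 2 ^ n \<and> B n k \<le> x}"

definition cantor_approx :: "nat \<Rightarrow> real \<Rightarrow> real" where
  "cantor_approx n x = left_count n x / 2 ^ n"

definition cantor_fun :: "real \<Rightarrow> real" where
  "cantor_fun x = (SUP n. cantor_approx n x)"

lemma left_set_eq: "{k. k < 2 ^ n \<and> B n k \<le> x} = {..<left_count n x}"
  unfolding left_count_def
proof (rule downward_closed_eq_lessThan_card)
  fix k j assume "k \<in> {k. k < 2 ^ n \<and> B n k \<le> x}" "j < k"
  then show "j \<in> {k. k < 2 ^ n \<and> B n k \<le> x}"
    using B_less_A[of j k n] A_less_B[of n k] by auto
qed simp

lemma B_le_iff_less_left_count: "k < 2 ^ n \<Longrightarrow> B n k \<le> x \<longleftrightarrow> k < left_count n x"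
  using left_set_eq[of n x] by blast

lemma left_count_le: "left_count n x \<le> 2 ^ n"
  unfolding left_count_def
  using card_mono[OF finite_lessThan, of "{k. k < 2 ^ n \<and> B n k \<le> x}" "2 ^ n"] by auto

lemma left_count_mono: "x \<le> y \<Longrightarrow> left_count n x \<le> left_count n y"
  unfolding left_count_def by (rule card_mono) auto

lemma left_count_Suc_ge: "2 * left_count n x \<le> left_count (Suc n) x"
proof -
  have "k < left_count (Suc n) x" if "k < 2 * left_count n x" for k
  proof -
    have "k div 2 < left_count n x" "k < 2 ^ Suc n" using that left_count_le[of n x] by auto
    then have "B n (k div 2) \<le> x" using B_le_iff_less_left_count by fastforce
    then have "B (Suc n) k \<le> x" using B_Suc_less_B[of n k] by linarith
    then show ?thesis using B_le_iff_less_left_count[OF \<open>k < 2 ^ Suc n\<close>] by simp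
  qed
  then show ?thesis by (metis le_less_linear less_irrefl)
qed

lemma left_count_Suc_le: "left_count (Suc n) x \<le> 2 * left_count n x + 2"
proof (rule ccontr)
  define l where "l = left_count n x"
  assume "\<not> ?thesis"
  then have big: "2 * l + 2 < left_count (Suc n) x" by (simp add: l_def)
  then have "2 * l + 2 < 2 ^ Suc n" using left_count_le[of "Suc n" x] by linarith
  then have "l < 2 ^ n" "Suc l < 2 ^ n" by simp_all
  have "B (Suc n) (2 * l + 2) \<le> x"
    using big B_le_iff_less_left_count[OF \<open>2 * l + 2 < 2 ^ Suc n\<close>] by simp
  moreover have "x < B n l" using B_le_iff_less_left_count[OF \<open>l < 2 ^ n\<close>, of x] by (simp add: l_def)
  moreover have "B n l < A n (Suc l)" using B_less_A \<open>Suc l < 2 ^ n\<close> by blast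
  moreover have "A n (Suc l) < A (Suc n) (2 * l + 2)" using A_less_A_Suc[of n "2 * l + 2"] by simp
  ultimately show False using A_less_B[of "Suc n" "2 * l + 2"] by linarith
qed

lemma left_count_add_ge: "2 ^ d * left_count n x \<le> left_count (n + d) x"
proof (induction d)
  case (Suc d)
  then have "2 ^ Suc d * left_count n x \<le> 2 * left_count (n + d) x" by simp
  also have "\<dots> \<le> left_count (n + Suc d) x" using left_count_Suc_ge[of "n + d" x] by simp
  finally show ?case .
qed simp

lemma left_count_add_le: "left_count (n + d) x + 2 \<le> 2 ^ d * (left_count n x + 2)"
proof (induction d)
  case (Suc d)
  have "left_count (n + Suc d) x + 2 \<le> 2 * (left_count (n + d) x + 2)"
    using left_count_Suc_le[of "n + d" x] by simp
  also have "\<dots> \<le> 2 ^ Suc d * (left_count n x + 2)" using Suc.IH by simp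
  finally show ?case .
qed simp

lemma cantor_approx_mono: "n \<le> m \<Longrightarrow> cantor_approx n x \<le> cantor_approx m x"
proof -
  assume "n \<le> m"
  then obtain d where m: "m = n + d" using le_Suc_ex by blast
  have "cantor_approx n x = 2 ^ d * real (left_count n x) / 2 ^ m"
    unfolding cantor_approx_def m power_add by simp
  also have "\<dots> \<le> left_count m x / 2 ^ m"
    using of_nat_mono[OF left_count_add_ge[of d n x], where 'a = real] unfolding m
    by (intro divide_right_mono) simp_all
  finally show ?thesis unfolding cantor_approx_def .
qed

lemma cantor_approx_le: "n \<le> m \<Longrightarrow> cantor_approx m x \<le> cantor_approx n x + 2 / 2 ^ n"
proof -
  assume "n \<le> m"
  then obtain d where m: "m = n + d" using le_Suc_ex by blast
  have "real (left_count m x) + 2 \<le> 2 ^ d * (real (left_count n x) + 2)"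
    using of_nat_mono[OF left_count_add_le[of n d x], where 'a = real] unfolding m
    by (simp add: distrib_left)
  then have "cantor_approx m x \<le> 2 ^ d * (real (left_count n x) + 2) / 2 ^ m"
    unfolding cantor_approx_def by (intro divide_right_mono) simp_all
  also have "\<dots> = cantor_approx n x + 2 / 2 ^ n"
    unfolding cantor_approx_def m power_add by (simp add: add_divide_distrib)
  finally show ?thesis .
qed

lemma bdd_above_cantor_approx: "bdd_above (range (\<lambda>n. cantor_approx n x))"
  using cantor_approx_le[of 0] by (intro bdd_aboveI2) auto

lemma cantor_approx_le_cantor_fun: "cantor_approx n x \<le> cantor_fun x"
  unfolding cantor_fun_def by (rule cSUP_upper[OF UNIV_I bdd_above_cantor_approx])

lemma cantor_fun_le_cantor_approx: "cantor_fun x \<le> cantor_approx n x + 2 / 2 ^ n"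
  unfolding cantor_fun_def
proof (rule cSUP_least)
  fix m
  show "cantor_approx m x \<le> cantor_approx n x + 2 / 2 ^ n"
  proof (cases "n \<le> m")
    case False
    then have "cantor_approx m x \<le> cantor_approx n x" by (simp add: cantor_approx_mono)
    then show ?thesis by (simp add: add_increasing2)
  qed (rule cantor_approx_le)
qed simp

lemma cantor_fun_eq_0: "x < A 0 0 \<Longrightarrow> cantor_fun x = 0"
proof -
  assume "x < A 0 0"
  then have "x < B n k" if "k < 2 ^ n" for n k
    using root_bounds[OF that] A_less_B[of n k] by linarith
  then have "left_count n x = 0" for n unfolding left_count_def by (auto simp: not_le)
  then show ?thesis by (simp add: cantor_fun_def cantor_approx_def)
qed

lemma cantor_fun_eq_1: "B 0 0 \<le> x \<Longrightarrow> cantor_fun x = 1"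
proof -
  assume "B 0 0 \<le> x"
  then have "{k. k < 2 ^ n \<and> B n k \<le> x} = {..<2 ^ n}" for n
    using root_bounds by fastforce
  then have "left_count n x = 2 ^ n" for n by (simp add: left_count_def)
  then show ?thesis by (simp add: cantor_fun_def cantor_approx_def)
qed

lemma cantor_fun_eqI:
  assumes "\<And>m. n \<le> m \<Longrightarrow> left_count m w = left_count m x"
  shows "cantor_fun w = cantor_fun x"
proof -
  have "\<bar>cantor_fun w - cantor_fun x\<bar> \<le> 2 / 2 ^ m" if "n \<le> m" for m
  proof -
    have "cantor_approx m w = cantor_approx m x" using assms[OF that] by (simp add: cantor_approx_def)
    then show ?thesis
      using cantor_approx_le_cantor_fun[of m w] cantor_approx_le_cantor_fun[of m x]
        cantor_fun_le_cantor_approx[of w m] cantor_fun_le_cantor_approx[of x m]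
      by (simp add: abs_le_iff)
  qed
  then have "\<bar>cantor_fun w - cantor_fun x\<bar> \<le> 0"
    using LIMSEQ_le_const[OF LIMSEQ_divide_realpow_zero[of 2 2]] by fastforce
  then show ?thesis by simp
qed

lemma left_count_le_Suc:
  assumes "x \<le> y" and short: "\<And>k. k < 2 ^ n \<Longrightarrow> y - x < B n k - A n k"
  shows "left_count n y \<le> Suc (left_count n x)"
proof (rule ccontr)
  define l where "l = left_count n x"
  assume "\<not> ?thesis"
  then have big: "Suc l < left_count n y" by (simp add: l_def)
  then have "Suc l < 2 ^ n" using left_count_le[of n y] by linarith
  then have "B n (Suc l) \<le> y" using big B_le_iff_less_left_count by blast
  moreover have "x < B n l" using B_le_iff_less_left_count[of l n x] \<open>Suc l < 2 ^ n\<close> by (simp add: l_def)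
  moreover have "B n l < A n (Suc l)" using B_less_A \<open>Suc l < 2 ^ n\<close> by blast
  ultimately show False using short[OF \<open>Suc l < 2 ^ n\<close>] by linarith
qed

lemma isCont_cantor_fun: "isCont cantor_fun x"
  unfolding continuous_at_eps_delta
proof (intro allI impI)
  fix e :: real assume "e > 0"
  have "\<forall>\<^sub>F n in sequentially. 3 / 2 ^ n < e"
    using order_tendstoD(2)[OF LIMSEQ_divide_realpow_zero \<open>e > 0\<close>] by simp
  then obtain n where n: "3 / 2 ^ n < e" by (auto simp: eventually_sequentially)
  define \<delta> where "\<delta> = Min ((\<lambda>k. B n k - A n k) ` {..<2 ^ n})"
  have "\<delta> > 0" unfolding \<delta>_def using A_less_B by (subst Min_gr_iff) (auto simp: lessThan_empty_iff)
  have short: "\<delta> \<le> B n k - A n k" if "k < 2 ^ n" for k using that by (simp add: \<delta>_def)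
  have "dist (cantor_fun y) (cantor_fun x) < e" if "dist y x < \<delta>" for y
  proof -
    have "y - x < B n k - A n k" "x - y < B n k - A n k" if "k < 2 ^ n" for k
      using \<open>dist y x < \<delta>\<close> short[OF that] by (auto simp: dist_real_def)
    then have "left_count n y \<le> Suc (left_count n x) \<and> left_count n x \<le> Suc (left_count n y)"
      using left_count_le_Suc[of x y n] left_count_le_Suc[of y x n]
        left_count_mono[of x y n] left_count_mono[of y x n] by (cases "x \<le> y") simp_all
    then have "\<bar>real (left_count n y) - real (left_count n x)\<bar> \<le> 1" by linarith
    then have "\<bar>cantor_approx n y - cantor_approx n x\<bar> \<le> 1 / 2 ^ n"
      by (simp add: cantor_approx_def divide_right_mono flip: diff_divide_distrib)
    moreover have "cantor_approx n y \<le> cantor_fun y" "cantor_fun y \<le> cantor_approx n y + 2 / 2 ^ n"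
      "cantor_approx n x \<le> cantor_fun x" "cantor_fun x \<le> cantor_approx n x + 2 / 2 ^ n"
      by (rule cantor_approx_le_cantor_fun cantor_fun_le_cantor_approx)+
    ultimately show ?thesis using n by (simp add: dist_real_def)
  qed
  with \<open>\<delta> > 0\<close> show "\<exists>\<delta>>0. \<forall>y. dist y x < \<delta> \<longrightarrow> dist (cantor_fun y) (cantor_fun x) < e" by blast
qed

lemma cantor_fun_locally_constant:
  assumes "x \<notin> cantor_set"
  shows "\<exists>e>0. \<forall>w\<in>ball x e. cantor_fun w = cantor_fun x"
proof -
  obtain n where "x \<notin> (\<Union>k<2 ^ n. {A n k..B n k})" using assms by (auto simp: cantor_set_def)
  moreover have "closed (\<Union>k<2 ^ n. {A n k..B n k})" by (intro closed_UN) auto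
  ultimately obtain e where "e > 0" and e: "ball x e \<subseteq> - (\<Union>k<2 ^ n. {A n k..B n k})"
    by (meson ComplI open_Compl open_contains_ball)
  have "cantor_fun w = cantor_fun x" if "w \<in> ball x e" for w
  proof (rule cantor_fun_eqI)
    fix m assume "n \<le> m"
    then obtain d where m: "m = n + d" using le_Suc_ex by blast
    have outside: "B m k \<notin> closed_segment x w" if "k < 2 ^ m" for k
    proof -
      have "k div 2 ^ d < 2 ^ n" using that by (simp add: m power_add less_mult_imp_div_less)
      then have "B m k \<in> (\<Union>k<2 ^ n. {A n k..B n k})"
        using ancestor_bounds[of n k d] A_less_B[of m k] unfolding m
        by (intro UN_I[of "k div 2 ^ d"]) auto
      moreover have "closed_segment x w \<subseteq> ball x e"
        using \<open>w \<in> ball x e\<close> \<open>e > 0\<close> by (meson centre_in_ball convex_ball convex_contains_segment)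
      ultimately show ?thesis using e by blast
    qed
    have "B m k \<le> w \<longleftrightarrow> B m k \<le> x" if "k < 2 ^ m" for k
      using outside[OF that] by (cases "x \<le> w") (auto simp: closed_segment_eq_real_ivl)
    then have "{k. k < 2 ^ m \<and> B m k \<le> w} = {k. k < 2 ^ m \<and> B m k \<le> x}" by blast
    then show "left_count m w = left_count m x" by (simp add: left_count_def)
  qed
  with \<open>e > 0\<close> show ?thesis by blast
qed

lemma isCont_on_cantor_set:
  fixes F :: "real \<Rightarrow> 'b::metric_space"
  assumes osc: "\<And>n k y z. y \<in> {A (Suc n) k..B (Suc n) k} \<Longrightarrow> z \<in> {A (Suc n) k..B (Suc n) k} \<Longrightarrow>
      dist (F y) (F z) \<le> 1 / Suc n"
    and "x \<in> cantor_set"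
  shows "isCont F x"
  unfolding continuous_at_eps_delta
proof (intro allI impI)
  fix e :: real assume "e > 0"
  then obtain n where n: "inverse (Suc n) < e" using reals_Archimedean by blast
  have "x \<in> (\<Union>k<2 ^ Suc (Suc n). {A (Suc (Suc n)) k..B (Suc (Suc n)) k})"
    using \<open>x \<in> cantor_set\<close> unfolding cantor_set_def by (rule INT_D) simp
  then obtain k where "A (Suc (Suc n)) k \<le> x" "x \<le> B (Suc (Suc n)) k" by auto
  then have inside: "A (Suc n) (k div 2) < x" "x < B (Suc n) (k div 2)"
    using A_less_A_Suc[of "Suc n" k] B_Suc_less_B[of "Suc n" k] by linarith+
  define \<delta> where "\<delta> = min (x - A (Suc n) (k div 2)) (B (Suc n) (k div 2) - x)"
  have "dist (F w) (F x) < e" if "dist w x < \<delta>" for w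
  proof -
    have "w \<in> {A (Suc n) (k div 2)..B (Suc n) (k div 2)}"
      using that by (auto simp: \<delta>_def dist_real_def)
    then have "dist (F w) (F x) \<le> 1 / Suc n" using inside by (intro osc) auto
    then show ?thesis using n by (simp add: inverse_eq_divide)
  qed
  moreover have "\<delta> > 0" using inside by (simp add: \<delta>_def)
  ultimately show "\<exists>\<delta>>0. \<forall>w. dist w x < \<delta> \<longrightarrow> dist (F w) (F x) < e" by blast
qed

end

primrec dyadic_tree :: "(nat \<Rightarrow> 'a \<Rightarrow> bool \<Rightarrow> 'a) \<Rightarrow> 'a \<Rightarrow> nat \<Rightarrow> nat \<Rightarrow> 'a" where
  "dyadic_tree child seed 0 k = seed"
| "dyadic_tree child seed (Suc n) k = child n (dyadic_tree child seed n (k div 2)) (odd k)"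

lemma dyadic_tree_invariant:
  assumes "P seed" and "\<And>n I c. P I \<Longrightarrow> P (child n I c)"
  shows "P (dyadic_tree child seed n k)"
  using assms by (induction n arbitrary: k) simp_all

lemma cantor_scheme_dyadic_tree:
  fixes child :: "nat \<Rightarrow> real \<times> real \<Rightarrow> bool \<Rightarrow> real \<times> real"
  assumes "P seed" and P_child: "\<And>n I c. P I \<Longrightarrow> P (child n I c)"
    and P_less: "\<And>I. P I \<Longrightarrow> fst I < snd I"
    and inside: "\<And>n I. P I \<Longrightarrow> fst I < fst (child n I False) \<and>
      snd (child n I False) < fst (child n I True) \<and> snd (child n I True) < snd I"
  shows "cantor_scheme (\<lambda>n k. fst (dyadic_tree child seed n k)) (\<lambda>n k. snd (dyadic_tree child seed n k))"
proof
  let ?T = "dyadic_tree child seed"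
  have P_T: "P (?T n k)" for n k using assms(1) P_child by (rule dyadic_tree_invariant)
  fix n k
  show "fst (?T n k) < snd (?T n k)" using P_less[OF P_T] .
  have "fst (?T n (k div 2)) < fst (child n (?T n (k div 2)) c) \<and>
      snd (child n (?T n (k div 2)) c) < snd (?T n (k div 2))" for c
    using inside[OF P_T[of n "k div 2"], of n]
      P_less[OF P_child[OF P_T[of n "k div 2"], of n False]]
      P_less[OF P_child[OF P_T[of n "k div 2"], of n True]]
    by (cases c) auto
  then show "fst (?T n (k div 2)) < fst (?T (Suc n) k)" "snd (?T (Suc n) k) < snd (?T n (k div 2))"
    by simp_all
  assume "even k"
  then show "snd (?T (Suc n) k) < fst (?T (Suc n) (Suc k))"
    using inside[OF P_T[of n "k div 2"], of n] by simp
qed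

lemma cantor_scheme_near_continuity_points:
  fixes F :: "real \<Rightarrow> real"
  assumes cont: "\<forall>x\<in>D. isCont F x" and perfect: "\<forall>x\<in>D. x islimpt D" and "D \<noteq> {}"
  obtains A B where "cantor_scheme A B"
    and "\<And>n k y z. y \<in> {A (Suc n) k..B (Suc n) k} \<Longrightarrow> z \<in> {A (Suc n) k..B (Suc n) k} \<Longrightarrow>
      dist (F y) (F z) \<le> 1 / Suc n"
proof -
  define good where "good I \<longleftrightarrow> (\<exists>d\<in>D. fst I < d \<and> d < snd I)" for I :: "real \<times> real"
  define small where
    "small n I \<longleftrightarrow> (\<forall>y\<in>{fst I..snd I}. \<forall>z\<in>{fst I..snd I}. dist (F y) (F z) \<le> 1 / Suc n)"
    for n and I :: "real \<times> real"
  define children where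
    "children n I J \<longleftrightarrow> (\<forall>c. good (J c) \<and> small n (J c)) \<and>
      fst I < fst (J False) \<and> snd (J False) < fst (J True) \<and> snd (J True) < snd I"
    for n and I :: "real \<times> real" and J :: "bool \<Rightarrow> real \<times> real"
  have children_exist: "\<exists>J. children n I J" if "good I" for n I
  proof -
    obtain d where "d \<in> D" "fst I < d" "d < snd I" using \<open>good I\<close> by (auto simp: good_def)
    moreover have "0 < 1 / real (Suc n)" by simp
    ultimately obtain a0 b0 a1 b1 where "fst I < a0" "a0 < b0" "b0 < a1" "a1 < b1" "b1 < snd I"
      "\<exists>d\<in>D. a0 < d \<and> d < b0" "\<exists>d\<in>D. a1 < d \<and> d < b1"
      "\<forall>y\<in>{a0..b0}. \<forall>z\<in>{a0..b0}. dist (F y) (F z) \<le> 1 / Suc n"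
      "\<forall>y\<in>{a1..b1}. \<forall>z\<in>{a1..b1}. dist (F y) (F z) \<le> 1 / Suc n"
      by (rule split_near_continuity_points[OF cont perfect])
    then have "children n I (\<lambda>c. if c then (a1, b1) else (a0, b0))"
      by (simp add: children_def good_def small_def)
    then show ?thesis by blast
  qed
  define split where "split n I = (SOME J. children n I J)" for n I
  have split: "children n I (split n I)" if "good I" for n I
    unfolding split_def using children_exist[OF that] by (rule someI_ex)
  obtain d where "d \<in> D" using \<open>D \<noteq> {}\<close> by blast
  then have "good (d - 1, d + 1)" by (auto simp: good_def intro!: bexI[of _ d])
  have good_split: "good (split n I c)" if "good I" for n I c
    using split[OF that] by (simp add: children_def)
  define T where "T = dyadic_tree split (d - 1, d + 1)"
  show ?thesis
  proof (rule that)
    show "cantor_scheme (\<lambda>n k. fst (T n k)) (\<lambda>n k. snd (T n k))"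
      unfolding T_def using \<open>good (d - 1, d + 1)\<close> good_split
    proof (rule cantor_scheme_dyadic_tree)
      show "fst I < snd I" if "good I" for I using that by (auto simp: good_def)
      show "fst I < fst (split n I False) \<and> snd (split n I False) < fst (split n I True) \<and>
          snd (split n I True) < snd I" if "good I" for n I
        using split[OF that] by (simp add: children_def)
    qed
    fix n k y z
    assume "y \<in> {fst (T (Suc n) k)..snd (T (Suc n) k)}" "z \<in> {fst (T (Suc n) k)..snd (T (Suc n) k)}"
    moreover have "good (T n (k div 2))"
      unfolding T_def using \<open>good (d - 1, d + 1)\<close> good_split by (rule dyadic_tree_invariant)
    then have "small n (T (Suc n) k)" using split by (simp add: T_def children_def)
    ultimately show "dist (F y) (F z) \<le> 1 / Suc n" by (simp add: small_def)
  qed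
qed

lemma continuous_nonconstant_locally_constant_at_discontinuities:
  fixes F :: "real \<Rightarrow> real"
  assumes "uncountable {x. isCont F x}"
  obtains g :: "real \<Rightarrow> real" and x y where "continuous_on UNIV g" "g x \<noteq> g y"
    "\<And>x. \<not> isCont F x \<Longrightarrow> \<exists>e>0. \<forall>w\<in>ball x e. g w = g x"
proof -
  obtain D where "D \<subseteq> {x. isCont F x}" "D \<noteq> {}" "\<forall>x\<in>D. x islimpt D"
    by (rule uncountable_imp_dense_in_itself_subset[OF assms])
  moreover from this(1) have "\<forall>x\<in>D. isCont F x" by blast
  ultimately obtain A B where scheme: "cantor_scheme A B" and osc: "\<And>n k y z.
      y \<in> {A (Suc n) k..B (Suc n) k} \<Longrightarrow> z \<in> {A (Suc n) k..B (Suc n) k} \<Longrightarrow> dist (F y) (F z) \<le> 1 / Suc n"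
    using cantor_scheme_near_continuity_points[of D F] by blast
  interpret cantor_scheme A B by (fact scheme)
  show ?thesis
  proof (rule that)
    show "continuous_on UNIV cantor_fun" by (simp add: continuous_at_imp_continuous_on isCont_cantor_fun)
    show "cantor_fun (A 0 0 - 1) \<noteq> cantor_fun (B 0 0)" by (simp add: cantor_fun_eq_0 cantor_fun_eq_1)
    have "isCont F x" if "x \<in> cantor_set" for x
      using that by (rule isCont_on_cantor_set[rotated]) (fact osc)
    then show "\<exists>e>0. \<forall>w\<in>ball x e. cantor_fun w = cantor_fun x" if "\<not> isCont F x" for x
      using that cantor_fun_locally_constant by blast
  qed
qed

theorem mainTheorem7:
  fixes F :: "real \<Rightarrow> real"
  assumes "darboux F"
    and "uncountable {x. isCont F x}"
  shows "\<exists>g :: real \<Rightarrow> real. continuous_on UNIV g \<and> (\<exists>x y. g x \<noteq> g y)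
           \<and> darboux (\<lambda>x. F x + g x)"
proof -
  obtain g :: "real \<Rightarrow> real" and x y where "continuous_on UNIV g" "g x \<noteq> g y"
    "\<And>x. \<not> isCont F x \<Longrightarrow> \<exists>e>0. \<forall>w\<in>ball x e. g w = g x"
    using continuous_nonconstant_locally_constant_at_discontinuities[OF assms(2)] by metis
  moreover from this have "darboux (\<lambda>x. F x + g x)"
    by (intro darboux_add_locally_constant[OF assms(1)])
  ultimately show ?thesis by blast
qed

end
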